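(* Let $G$ be a graph and $uv$ an edge of $G$. If $G$ admits a tree 3-spanner with 5-center $u,v$, then $G$ admits a $uv$-concentrated tree 3-spanner.
   Context: Graphs are finite, simple and loopless. A tree 3-spanner of $G$ is a spanning subgraph $T$ of $G$ that is a tree and satisfies $d_T(a,b)\le 3\,d_G(a,b)$ for all vertices $a,b$ of $G$. A 5-center of a tree $T$ is a pair of vertices $u,v$ that are adjacent in $T$ and such that every vertex of $T$ is within $T$-distance 2 of $u$ or of $v$. A tree 3-spanner $T$ of $G$ is $uv$-concentrated if all three of the following hold: (1) $u,v$ is a 5-center of $T$; (2) every $G$-neighbour $w$ of $u$ with $d_T(w,u)<d_T(w,v)$ is a $T$-neighbour of $u$; (3) every $G$-neighbour $w$ of $v$ with $d_T(w,v)<d_T(w,u)$ is a $T$-neighbour of $v$. *)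

theory Defs
  imports Main "HOL-Library.Extended_Nat"
begin

definition simple_graph :: "'a set \<Rightarrow> 'a set set \<Rightarrow> bool" where
  "simple_graph V E \<longleftrightarrow> finite V \<and> (\<forall>e\<in>E. \<exists>a b. e = {a, b} \<and> a \<noteq> b \<and> a \<in> V \<and> b \<in> V)"

definition walk :: "'a set \<Rightarrow> 'a set set \<Rightarrow> 'a list \<Rightarrow> bool" where
  "walk V E p \<longleftrightarrow> p \<noteq> [] \<and> set p \<subseteq> V \<and> (\<forall>i. Suc i < length p \<longrightarrow> {p ! i, p ! Suc i} \<in> E)"

definition gdist :: "'a set \<Rightarrow> 'a set set \<Rightarrow> 'a \<Rightarrow> 'a \<Rightarrow> enat" where
  "gdist V E a b = (INF p \<in> {p. walk V E p \<and> hd p = a \<and> last p = b}. enat (length p - 1))"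

definition connected_graph :: "'a set \<Rightarrow> 'a set set \<Rightarrow> bool" where
  "connected_graph V E \<longleftrightarrow> (\<forall>a\<in>V. \<forall>b\<in>V. \<exists>p. walk V E p \<and> hd p = a \<and> last p = b)"

definition has_cycle :: "'a set \<Rightarrow> 'a set set \<Rightarrow> bool" where
  "has_cycle V E \<longleftrightarrow> (\<exists>p. walk V E p \<and> distinct p \<and> length p \<ge> 3 \<and> {last p, hd p} \<in> E)"

definition is_tree :: "'a set \<Rightarrow> 'a set set \<Rightarrow> bool" where
  "is_tree V T \<longleftrightarrow> simple_graph V T \<and> connected_graph V T \<and> \<not> has_cycle V T"

definition tree_3_spanner :: "'a set \<Rightarrow> 'a set set \<Rightarrow> 'a set set \<Rightarrow> bool" where
  "tree_3_spanner V E T \<longleftrightarrow> T \<subseteq> E \<and> is_tree V T \<and>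
     (\<forall>a\<in>V. \<forall>b\<in>V. gdist V T a b \<le> 3 * gdist V E a b)"

definition five_center :: "'a set \<Rightarrow> 'a set set \<Rightarrow> 'a \<Rightarrow> 'a \<Rightarrow> bool" where
  "five_center V T u v \<longleftrightarrow> u \<in> V \<and> v \<in> V \<and> {u, v} \<in> T \<and>
     (\<forall>w\<in>V. gdist V T w u \<le> 2 \<or> gdist V T w v \<le> 2)"

definition concentrated :: "'a set \<Rightarrow> 'a set set \<Rightarrow> 'a set set \<Rightarrow> 'a \<Rightarrow> 'a \<Rightarrow> bool" where
  "concentrated V E T u v \<longleftrightarrow> five_center V T u v \<and>
     (\<forall>w\<in>V. {w, u} \<in> E \<and> gdist V T w u < gdist V T w v \<longrightarrow> {w, u} \<in> T) \<and>
     (\<forall>w\<in>V. {w, v} \<in> E \<and> gdist V T w v < gdist V T w u \<longrightarrow> {w, v} \<in> T)"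

end

theory Submission
  imports Defs
begin

text \<open>Every vertex lies on the side of the centre (\<open>u\<close> or \<open>v\<close>) nearer to it in \<open>T\<close>, at distance
  at most 2 from that centre, and \<open>uv\<close> is the only tree edge between the sides. Build a new tree
  rooted at \<open>v\<close>: \<open>u\<close> hangs from \<open>v\<close>; a vertex on the side of \<open>u\<close> hangs from \<open>u\<close> if it is
  adjacent to \<open>u\<close> in \<open>G\<close>, and otherwise keeps its \<open>T\<close>-edge towards \<open>u\<close>; symmetrically on the
  side of \<open>v\<close>. For the stretch bound on an edge \<open>ab\<close>
  of \<open>G\<close> one routes through the centres, which is short enough because \<open>a\<close> and \<open>b\<close> are close
  in \<open>T\<close>; the one exception, \<open>a\<close> and \<open>b\<close> both at distance 2 from the same centre and not
  adjacent to it, is handled by noting that they then share their \<open>T\<close>-neighbour towards the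
  centre, which is their common parent in the new tree.\<close>

lemma walk_singleton [simp]: "walk V E [x] \<longleftrightarrow> x \<in> V"
  by (simp add: walk_def)

lemma walk_Cons_Cons [simp]:
  "walk V E (x # y # p) \<longleftrightarrow> x \<in> V \<and> {x, y} \<in> E \<and> walk V E (y # p)"
proof -
  have "(\<forall>i. Suc i < length (x # y # p) \<longrightarrow> {(x # y # p) ! i, (x # y # p) ! Suc i} \<in> E)
    \<longleftrightarrow> {x, y} \<in> E \<and> (\<forall>i. Suc i < length (y # p) \<longrightarrow> {(y # p) ! i, (y # p) ! Suc i} \<in> E)"
    (is "?l \<longleftrightarrow> ?r")
  proof
    assume ?r
    show ?l
    proof (intro allI impI)
      fix i assume "Suc i < length (x # y # p)"
      with \<open>?r\<close> show "{(x # y # p) ! i, (x # y # p) ! Suc i} \<in> E" by (cases i) simp_all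
    qed
  next
    assume l: ?l
    then have "{x, y} \<in> E" by (metis length_Cons nth_Cons_0 nth_Cons_Suc zero_less_Suc Suc_less_eq)
    moreover have "\<forall>i. Suc i < length (y # p) \<longrightarrow> {(y # p) ! i, (y # p) ! Suc i} \<in> E"
      using l by (metis Suc_less_eq length_Cons nth_Cons_Suc)
    ultimately show ?r ..
  qed
  then show ?thesis by (auto simp: walk_def)
qed

lemma walk_not_Nil: "walk V E p \<Longrightarrow> p \<noteq> []"
  by (simp add: walk_def)

lemma walk_hd_in: "walk V E p \<Longrightarrow> hd p \<in> V"
  by (cases p) (auto simp: walk_def)

lemma walk_append:
  "walk V E p \<Longrightarrow> walk V E q \<Longrightarrow> last p = hd q \<Longrightarrow> walk V E (p @ tl q)"
proof (induction p rule: induct_list012)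
  case 1
  then show ?case by (simp add: walk_def)
next
  case (2 x)
  then show ?case by (cases q) auto
qed auto

lemma walk_rev: "walk V E p \<Longrightarrow> walk V E (rev p)"
proof (induction p rule: induct_list012)
  case (3 x y zs)
  then have "walk V E (rev (y # zs) @ tl [y, x])"
    using walk_hd_in[of V E "y # zs"] by (intro walk_append) (auto simp: insert_commute)
  then show ?case by simp
qed simp_all

lemma gdist_le_enat_iff:
  "gdist V E a b \<le> enat n \<longleftrightarrow> (\<exists>p. walk V E p \<and> hd p = a \<and> last p = b \<and> length p \<le> Suc n)"
proof -
  have len: "enat (length p - 1) < enat (Suc n) \<longleftrightarrow> length p \<le> Suc n"
    if "walk V E p" for p :: "'a list"
    using walk_not_Nil[OF that] by (cases p) (simp_all add: less_Suc_eq_le)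
  have "gdist V E a b \<le> enat n \<longleftrightarrow> gdist V E a b < enat (Suc n)"
    by (cases "gdist V E a b") (simp_all add: less_Suc_eq_le)
  also have "\<dots> \<longleftrightarrow> (\<exists>p\<in>{p. walk V E p \<and> hd p = a \<and> last p = b}. enat (length p - 1) < enat (Suc n))"
    unfolding gdist_def by (rule INF_less_iff)
  also have "\<dots> \<longleftrightarrow> (\<exists>p. walk V E p \<and> hd p = a \<and> last p = b \<and> length p \<le> Suc n)"
    using len by blast
  finally show ?thesis .
qed

lemma gdist_self: "a \<in> V \<Longrightarrow> gdist V E a a = 0"
proof -
  assume "a \<in> V"
  then have "gdist V E a a \<le> enat 0"
    unfolding gdist_le_enat_iff by (intro exI[of _ "[a]"]) simp
  then show ?thesis by (metis le_zero_eq zero_enat_def)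
qed

lemma gdist_edge: "a \<in> V \<Longrightarrow> b \<in> V \<Longrightarrow> {a, b} \<in> E \<Longrightarrow> gdist V E a b \<le> 1"
  unfolding one_enat_def gdist_le_enat_iff by (intro exI[of _ "[a, b]"]) simp

lemma gdist_le_0_imp_eq: "gdist V E a b \<le> enat 0 \<Longrightarrow> a = b"
proof -
  assume "gdist V E a b \<le> enat 0"
  then obtain p where p: "walk V E p" "hd p = a" "last p = b" "length p \<le> Suc 0"
    unfolding gdist_le_enat_iff by blast
  then obtain x where "p = [x]" using walk_not_Nil[OF p(1)] by (cases p) auto
  with p show "a = b" by simp
qed

lemma gdist_le_Suc_cases:
  assumes "gdist V E a b \<le> enat (Suc n)"
  shows "a = b \<or> (\<exists>c\<in>V. {a, c} \<in> E \<and> gdist V E c b \<le> enat n)"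
proof -
  obtain p where p: "walk V E p" "hd p = a" "last p = b" "length p \<le> Suc (Suc n)"
    using assms unfolding gdist_le_enat_iff by blast
  obtain q where q: "p = a # q" using p(1,2) walk_not_Nil by (cases p) auto
  show ?thesis
  proof (cases q)
    case Nil
    then show ?thesis using p(3) q by simp
  next
    case (Cons c zs)
    then have "gdist V E c b \<le> enat n"
      unfolding gdist_le_enat_iff using p q by (intro exI[of _ "c # zs"]) auto
    then show ?thesis using Cons p q walk_hd_in[of V E "c # zs"] by auto
  qed
qed

lemma gdist_commute: "gdist V E a b = gdist V E b a"
proof -
  have le: "gdist V E x y \<le> gdist V E y x" for x y
  proof (cases "gdist V E y x")
    case (enat n)
    then obtain p where "walk V E p" "hd p = y" "last p = x" "length p \<le> Suc n"
      using gdist_le_enat_iff[of V E y x n] by auto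
    then have "gdist V E x y \<le> enat n"
      unfolding gdist_le_enat_iff by (intro exI[of _ "rev p"]) (simp add: walk_rev hd_rev last_rev)
    then show ?thesis using enat by simp
  qed simp
  show ?thesis by (rule antisym) (rule le)+
qed

lemma gdist_triangle: "gdist V E a c \<le> gdist V E a b + gdist V E b c"
proof (cases "gdist V E a b"; cases "gdist V E b c")
  fix m n assume "gdist V E a b = enat m" "gdist V E b c = enat n"
  then obtain p q where p: "walk V E p" "hd p = a" "last p = b" "length p \<le> Suc m"
    and q: "walk V E q" "hd q = b" "last q = c" "length q \<le> Suc n"
    using gdist_le_enat_iff[of V E a b m] gdist_le_enat_iff[of V E b c n] by auto
  have "q \<noteq> []" using q walk_not_Nil by blast
  then have "walk V E (p @ tl q) \<and> hd (p @ tl q) = a \<and> last (p @ tl q) = c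
      \<and> length (p @ tl q) \<le> Suc (m + n)"
    using walk_append[OF p(1) q(1)] p q walk_not_Nil[OF p(1)] by (cases q) auto
  then have "gdist V E a c \<le> enat (m + n)"
    unfolding gdist_le_enat_iff by blast
  then show ?thesis using \<open>gdist V E a b = enat m\<close> \<open>gdist V E b c = enat n\<close> by simp
qed simp_all

lemma potential_diff_le_gdist:
  fixes g :: "'a \<Rightarrow> int"
  assumes lip: "\<And>x y. x \<in> V \<Longrightarrow> y \<in> V \<Longrightarrow> {x, y} \<in> E \<Longrightarrow> \<bar>g x - g y\<bar> \<le> 1"
    and "gdist V E a b \<le> enat n"
  shows "\<bar>g a - g b\<bar> \<le> int n"
proof -
  have walk: "\<bar>g (hd p) - g (last p)\<bar> \<le> int (length p - 1)" if "walk V E p" for p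
    using that
  proof (induction p rule: induct_list012)
    case (3 x y zs)
    then have "\<bar>g x - g y\<bar> \<le> 1" using lip walk_hd_in[of V E "y # zs"] by simp
    then show ?case using 3 by auto
  qed (simp_all add: walk_def)
  obtain p where p: "walk V E p" "hd p = a" "last p = b" "length p \<le> Suc n"
    using assms(2) unfolding gdist_le_enat_iff by blast
  have "\<bar>g a - g b\<bar> \<le> int (length p - 1)" using walk[OF p(1)] p(2,3) by simp
  also have "\<dots> \<le> int n" using p(4) by simp
  finally show ?thesis .
qed

lemma gdist_le_3_times_of_edges:
  assumes "\<And>a b. a \<in> V \<Longrightarrow> b \<in> V \<Longrightarrow> {a, b} \<in> E \<Longrightarrow> gdist V T a b \<le> 3"
  shows "gdist V T a b \<le> 3 * gdist V E a b"
proof (cases "gdist V E a b")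
  case (enat n)
  have walk: "gdist V T (hd p) (last p) \<le> enat (3 * (length p - 1))" if "walk V E p" for p
    using that
  proof (induction p rule: induct_list012)
    case (2 x)
    then show ?case using gdist_self[of x V T] by (simp add: zero_enat_def)
  next
    case (3 x y zs)
    have "gdist V T x (last (y # zs)) \<le> gdist V T x y + gdist V T y (last (y # zs))"
      by (rule gdist_triangle)
    also have "\<dots> \<le> 3 + enat (3 * (length (y # zs) - 1))"
      using 3 assms walk_hd_in[of V E "y # zs"] by (intro add_mono) auto
    finally show ?case by (simp add: numeral_eq_enat)
  qed (simp add: walk_def)
  obtain p where p: "walk V E p" "hd p = a" "last p = b" "length p \<le> Suc n"
    using enat gdist_le_enat_iff[of V E a b n] by auto
  have "gdist V T a b \<le> enat (3 * (length p - 1))" using walk[OF p(1)] p(2,3) by simp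
  also have "\<dots> \<le> enat (3 * n)" using p(4) by simp
  finally have "gdist V T a b \<le> enat (3 * n)" .
  then show ?thesis using enat by (simp add: numeral_eq_enat)
qed (simp add: numeral_eq_enat)

text \<open>No cycle: a vertex of maximal rank on it would need both of its cycle-neighbours to be
  its parent.\<close>
lemma is_tree_of_parent_map:
  fixes parent :: "'a \<Rightarrow> 'a" and rank :: "'a \<Rightarrow> nat"
  assumes fin: "finite V" and root: "\<rho> \<in> V"
    and parent: "\<And>x. x \<in> V \<Longrightarrow> x \<noteq> \<rho> \<Longrightarrow> parent x \<in> V \<and> rank (parent x) < rank x"
    and T: "T = {{x, parent x} | x. x \<in> V \<and> x \<noteq> \<rho>}"
  shows "is_tree V T"
proof -
  have simple: "simple_graph V T"
    unfolding simple_graph_def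
  proof (intro conjI ballI fin)
    fix e assume "e \<in> T"
    then obtain x where "e = {x, parent x}" "x \<in> V" "x \<noteq> \<rho>" unfolding T by blast
    with parent[of x] show "\<exists>a b. e = {a, b} \<and> a \<noteq> b \<and> a \<in> V \<and> b \<in> V" by force
  qed
  have to_root: "gdist V T x \<rho> \<le> enat (rank x)" if "x \<in> V" for x
    using that
  proof (induction "rank x" arbitrary: x rule: less_induct)
    case less
    show ?case
    proof (cases "x = \<rho>")
      case True
      then show ?thesis using gdist_self[OF root] by (simp add: zero_enat_def)
    next
      case False
      then have "{x, parent x} \<in> T" using less.prems unfolding T by blast
      have "gdist V T x \<rho> \<le> gdist V T x (parent x) + gdist V T (parent x) \<rho>"
        by (rule gdist_triangle)
      also have "\<dots> \<le> 1 + enat (rank (parent x))"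
        using gdist_edge[of x V "parent x" T] less parent[of x] False \<open>{x, parent x} \<in> T\<close>
        by (intro add_mono) auto
      also have "\<dots> \<le> enat (rank x)" using parent[OF less.prems False] by (simp add: one_enat_def)
      finally show ?thesis .
    qed
  qed
  have conn: "connected_graph V T"
    unfolding connected_graph_def
  proof (intro ballI)
    fix a b assume "a \<in> V" "b \<in> V"
    have "gdist V T a b \<le> gdist V T a \<rho> + gdist V T \<rho> b"
      by (rule gdist_triangle)
    also have "\<dots> \<le> enat (rank a) + enat (rank b)"
      using to_root \<open>a \<in> V\<close> \<open>b \<in> V\<close> gdist_commute[of V T \<rho> b] by (intro add_mono) auto
    finally have "gdist V T a b \<le> enat (rank a + rank b)" by simp
    then show "\<exists>p. walk V T p \<and> hd p = a \<and> last p = b"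
      unfolding gdist_le_enat_iff by blast
  qed
  have up: "y = parent x \<or> rank x < rank y" if "{x, y} \<in> T" for x y
    using that parent unfolding T by (auto simp: doubleton_eq_iff)
  have acyc: "\<not> has_cycle V T"
  proof
    assume "has_cycle V T"
    then obtain p where p: "walk V T p" "distinct p" "length p \<ge> 3" "{last p, hd p} \<in> T"
      unfolding has_cycle_def by blast
    define n where "n = length p"
    define succ where "succ i = (if Suc i < n then Suc i else 0)" for i
    have step: "{p ! i, p ! succ i} \<in> T" if "i < n" for i
    proof (cases "Suc i < n")
      case True
      then show ?thesis using p(1) unfolding walk_def n_def succ_def by auto
    next
      case False
      then have "i = length p - 1" "p \<noteq> []" using that p(3) n_def by auto
      then have "p ! i = last p" "p ! succ i = hd p"
        using False by (simp_all add: n_def succ_def last_conv_nth hd_conv_nth)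
      then show ?thesis using p(4) by simp
    qed
    obtain i where i: "i < n" "\<And>j. j < n \<Longrightarrow> rank (p ! j) \<le> rank (p ! i)"
    proof -
      have "Max (rank ` set p) \<in> rank ` set p" using p(3) by (intro Max_in) auto
      then obtain i where "i < n" "rank (p ! i) = Max (rank ` set p)"
        by (auto simp: in_set_conv_nth n_def)
      moreover have "rank (p ! j) \<le> Max (rank ` set p)" if "j < n" for j
        using that by (simp add: n_def)
      ultimately show thesis using that by auto
    qed
    define j where "j = (if i = 0 then n - 1 else i - 1)"
    have j: "j < n" "succ j = i" using i p(3) by (auto simp: j_def succ_def n_def)
    have s: "succ i < n" using i(1) p(3) by (auto simp: succ_def n_def)
    have "p ! succ i = parent (p ! i)"
      using up[OF step[OF i(1)]] i(2)[OF s] by (meson leD)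
    moreover have "p ! j = parent (p ! i)"
      using up[of "p ! i" "p ! j"] step[OF j(1)] i(2)[OF j(1)] j(2) by (metis insert_commute leD)
    ultimately have "succ i = j"
      using nth_eq_iff_index_eq[OF p(2)] s j(1) n_def by metis
    then show False
      using i(1) p(3) unfolding succ_def j_def n_def by (simp split: if_split_asm)
  qed
  show ?thesis unfolding is_tree_def using simple conn acyc by blast
qed

text \<open>Only meaningful where the distance is finite (\<open>the_enat \<infinity>\<close> is unspecified).\<close>
definition dist_to :: "'a set \<Rightarrow> 'a set set \<Rightarrow> 'a \<Rightarrow> 'a \<Rightarrow> nat" where
  "dist_to V T c x = the_enat (gdist V T x c)"

definition step_toward :: "'a set \<Rightarrow> 'a set set \<Rightarrow> 'a \<Rightarrow> 'a \<Rightarrow> 'a" where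
  "step_toward V T c x = (SOME y. y \<in> V \<and> {x, y} \<in> T \<and> {y, c} \<in> T)"

locale five_centered_spanner =
  fixes V :: "'a set" and E T :: "'a set set" and u v :: 'a
  assumes simple: "simple_graph V E"
    and spanner: "tree_3_spanner V E T"
    and five_center: "five_center V T u v"
begin

abbreviation du :: "'a \<Rightarrow> nat" where "du \<equiv> dist_to V T u"
abbreviation dv :: "'a \<Rightarrow> nat" where "dv \<equiv> dist_to V T v"

lemma T_subset_E: "T \<subseteq> E"
  using spanner by (simp add: tree_3_spanner_def)

lemma no_T_cycle: "walk V T p \<Longrightarrow> distinct p \<Longrightarrow> 3 \<le> length p \<Longrightarrow> {last p, hd p} \<in> T \<Longrightarrow> False"
  using spanner unfolding tree_3_spanner_def is_tree_def has_cycle_def by blast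

lemma u_in_V: "u \<in> V" and v_in_V: "v \<in> V" and uv_in_T: "{u, v} \<in> T"
  using five_center by (auto simp: five_center_def)

lemma E_edge_neq: "{x, y} \<in> E \<Longrightarrow> x \<noteq> y"
  using simple unfolding simple_graph_def by (metis doubleton_eq_iff insert_absorb2)

lemma T_edge_in_V: "{x, y} \<in> T \<Longrightarrow> x \<in> V"
  using spanner unfolding tree_3_spanner_def is_tree_def simple_graph_def
  by (metis doubleton_eq_iff)

lemma T_edge_neq: "{x, y} \<in> T \<Longrightarrow> x \<noteq> y"
  using T_subset_E E_edge_neq by blast

lemma u_neq_v: "u \<noteq> v"
  using T_edge_neq uv_in_T by blast

lemma gdist_T_le_3_of_E_edge: "a \<in> V \<Longrightarrow> b \<in> V \<Longrightarrow> {a, b} \<in> E \<Longrightarrow> gdist V T a b \<le> 3"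
  using spanner gdist_edge[of a V b E] unfolding tree_3_spanner_def
  by (metis mult.right_neutral mult_left_mono order_trans zero_le)

lemma gdist_to_centers_close: "gdist V T x u \<le> gdist V T x v + 1" "gdist V T x v \<le> gdist V T x u + 1"
proof -
  have "gdist V T v u \<le> 1" "gdist V T u v \<le> 1"
    using gdist_edge u_in_V v_in_V uv_in_T by (metis insert_commute)+
  then show "gdist V T x u \<le> gdist V T x v + 1" "gdist V T x v \<le> gdist V T x u + 1"
    using gdist_triangle[of V T x u v] gdist_triangle[of V T x v u]
    by (meson add_left_mono order_trans)+
qed

lemma gdist_to_center:
  assumes "x \<in> V" "c \<in> {u, v}"
  shows "gdist V T x c = enat (dist_to V T c x)" "dist_to V T c x \<le> 3"
proof -
  have "gdist V T x u \<le> 3 \<and> gdist V T x v \<le> 3"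
  proof (cases "gdist V T x u \<le> 2")
    case True
    have "gdist V T x v \<le> gdist V T x u + 1" by (rule gdist_to_centers_close)
    also have "\<dots> \<le> 2 + 1" using True by (rule add_right_mono)
    finally show ?thesis using True order_trans[of _ "2::enat" 3] by simp
  next
    case False
    then have v2: "gdist V T x v \<le> 2" using five_center assms(1) unfolding five_center_def by blast
    have "gdist V T x u \<le> gdist V T x v + 1" by (rule gdist_to_centers_close)
    also have "\<dots> \<le> 2 + 1" using v2 by (rule add_right_mono)
    finally show ?thesis using v2 order_trans[of _ "2::enat" 3] by simp
  qed
  then have "gdist V T x c \<le> enat 3" using assms(2) by (auto simp: numeral_eq_enat)
  then obtain k where "gdist V T x c = enat k" "k \<le> 3" by (cases "gdist V T x c") auto
  then show "gdist V T x c = enat (dist_to V T c x)" "dist_to V T c x \<le> 3"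
    by (simp_all add: dist_to_def)
qed

lemma gdist_center_le_iff:
  "x \<in> V \<Longrightarrow> c \<in> {u, v} \<Longrightarrow> gdist V T x c \<le> enat n \<longleftrightarrow> dist_to V T c x \<le> n"
  using gdist_to_center by simp

lemma dist_to_eq_0_iff: "x \<in> V \<Longrightarrow> c \<in> {u, v} \<Longrightarrow> dist_to V T c x = 0 \<longleftrightarrow> x = c"
  using gdist_center_le_iff[of x c 0] gdist_le_0_imp_eq[of V T x c] gdist_self[of x V T]
  by (auto simp: zero_enat_def)

lemma dist_to_le_1_of_T_edge:
  "x \<in> V \<Longrightarrow> c \<in> {u, v} \<Longrightarrow> {x, c} \<in> T \<Longrightarrow> dist_to V T c x \<le> 1"
  using gdist_center_le_iff[of x c 1] gdist_edge[of x V c T] u_in_V v_in_V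
  by (auto simp: one_enat_def)

lemma dist_to_T_edge_le:
  assumes "x \<in> V" "y \<in> V" "{x, y} \<in> T" "c \<in> {u, v}"
  shows "dist_to V T c x \<le> dist_to V T c y + 1"
proof -
  have "gdist V T x c \<le> gdist V T x y + gdist V T y c" by (rule gdist_triangle)
  also have "\<dots> \<le> 1 + enat (dist_to V T c y)"
    using gdist_edge[of x V y T] gdist_to_center[of y c] assms by (intro add_mono) auto
  finally show ?thesis using gdist_to_center[of x c] assms by (simp add: one_enat_def)
qed

lemma dist_to_eq_1_iff: "x \<in> V \<Longrightarrow> c \<in> {u, v} \<Longrightarrow> dist_to V T c x = 1 \<longleftrightarrow> {x, c} \<in> T"
proof
  assume x: "x \<in> V" and c: "c \<in> {u, v}" and "dist_to V T c x = 1"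
  then have "x \<noteq> c" "gdist V T x c \<le> enat (Suc 0)"
    using dist_to_eq_0_iff[OF x c] gdist_center_le_iff[OF x c] by auto
  then obtain y where "{x, y} \<in> T" "gdist V T y c \<le> enat 0"
    using gdist_le_Suc_cases[of V T x c 0] by blast
  then show "{x, c} \<in> T" using gdist_le_0_imp_eq[of V T y c] by simp
next
  assume x: "x \<in> V" and c: "c \<in> {u, v}" and e: "{x, c} \<in> T"
  then have "dist_to V T c x \<le> 1" "dist_to V T c x \<noteq> 0"
    using dist_to_le_1_of_T_edge[OF x c e] dist_to_eq_0_iff[OF x c] T_edge_neq[OF e] by auto
  then show "dist_to V T c x = 1" by simp
qed

lemma T_path_of_dist_to_2:
  assumes "x \<in> V" "c \<in> {u, v}" "dist_to V T c x = 2"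
  shows "\<exists>y\<in>V. {x, y} \<in> T \<and> {y, c} \<in> T"
proof -
  have "x \<noteq> c" using assms dist_to_eq_0_iff by force
  moreover have "gdist V T x c \<le> enat (Suc 1)" using assms gdist_center_le_iff by simp
  ultimately obtain y where y: "y \<in> V" "{x, y} \<in> T" "gdist V T y c \<le> enat (Suc 0)"
    using gdist_le_Suc_cases[of V T x c 1] by auto
  have "y \<noteq> c" using dist_to_le_1_of_T_edge[of x c] assms y by auto
  then obtain z where "{y, z} \<in> T" "gdist V T z c \<le> enat 0"
    using gdist_le_Suc_cases[OF y(3)] by blast
  then have "{y, c} \<in> T" using gdist_le_0_imp_eq[of V T z c] by simp
  then show ?thesis using y by blast
qed

lemma dist_u_dist_v_close: "x \<in> V \<Longrightarrow> du x \<le> dv x + 1 \<and> dv x \<le> du x + 1"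
  using gdist_to_centers_close[of x] gdist_to_center[of x u] gdist_to_center[of x v]
  by (simp add: one_enat_def)

lemma dist_center_le_2: "x \<in> V \<Longrightarrow> du x \<le> 2 \<or> dv x \<le> 2"
  using five_center gdist_center_le_iff[of x u 2] gdist_center_le_iff[of x v 2]
  unfolding five_center_def by (auto simp: numeral_eq_enat)

lemma dist_centers: "du u = 0" "dv v = 0" "du v = 1" "dv u = 1"
proof -
  show "du u = 0" "dv v = 0" using dist_to_eq_0_iff u_in_V v_in_V by auto
  have "du v \<le> 1" "dv u \<le> 1"
    using dist_to_le_1_of_T_edge u_in_V v_in_V uv_in_T by (auto simp: insert_commute)
  moreover have "du v \<noteq> 0" "dv u \<noteq> 0" using dist_to_eq_0_iff u_in_V v_in_V u_neq_v by auto
  ultimately show "du v = 1" "dv u = 1" by auto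
qed

lemma not_T_adjacent_to_both_centers:
  assumes "{x, u} \<in> T" "{x, v} \<in> T"
  shows False
  using no_T_cycle[of "[x, u, v]"] assms T_edge_neq[OF assms(1)] T_edge_neq[OF assms(2)] u_neq_v
    uv_in_T u_in_V v_in_V T_edge_in_V[OF assms(1)] by (auto simp: insert_commute)

text \<open>Equal distances to the ends of the tree edge \<open>uv\<close> would close a cycle through it.\<close>
lemma du_neq_dv: "x \<in> V \<Longrightarrow> du x \<noteq> dv x"
proof
  assume x: "x \<in> V" and eq: "du x = dv x"
  have "du x \<le> 2" using dist_center_le_2[OF x] eq by auto
  then consider "du x = 0" | "du x = 1" | "du x = 2" by linarith
  then show False
  proof cases
    case 1
    then show False
      using eq dist_to_eq_0_iff[OF x, of u] dist_to_eq_0_iff[OF x, of v] u_neq_v by simp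
  next
    case 2
    then show False using eq dist_to_eq_1_iff[OF x] not_T_adjacent_to_both_centers by auto
  next
    case 3
    obtain y where y: "y \<in> V" "{x, y} \<in> T" "{y, u} \<in> T"
      using T_path_of_dist_to_2[OF x, of u] 3 by auto
    obtain z where z: "z \<in> V" "{x, z} \<in> T" "{z, v} \<in> T"
      using T_path_of_dist_to_2[OF x, of v] 3 eq by auto
    have "y \<noteq> z" using not_T_adjacent_to_both_centers y z by blast
    moreover have "y \<noteq> v" "z \<noteq> u"
      using dist_to_eq_1_iff[OF x, of u] dist_to_eq_1_iff[OF x, of v] y z 3 eq by auto
    moreover have "x \<noteq> u" "x \<noteq> v"
      using dist_to_eq_0_iff[OF x, of u] dist_to_eq_0_iff[OF x, of v] 3 eq by auto
    moreover have "y \<noteq> u" "z \<noteq> v" "x \<noteq> y" "x \<noteq> z" using T_edge_neq y z by auto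
    ultimately show False
      using no_T_cycle[of "[x, y, u, v, z]"] x y z uv_in_T u_neq_v u_in_V v_in_V
      by (auto simp: insert_commute)
  qed
qed

lemma u_side_dists: "x \<in> V \<Longrightarrow> du x < dv x \<Longrightarrow> du x \<le> 2 \<and> dv x = du x + 1"
  using dist_u_dist_v_close[of x] dist_center_le_2[of x] by auto

lemma v_side_dists: "x \<in> V \<Longrightarrow> \<not> du x < dv x \<Longrightarrow> dv x < du x \<and> dv x \<le> 2 \<and> du x = dv x + 1"
  using dist_u_dist_v_close[of x] dist_center_le_2[of x] du_neq_dv[of x] by auto

lemma step_toward_u:
  assumes x: "x \<in> V" "du x < dv x" "du x = 2"
  defines "y \<equiv> step_toward V T u x"
  shows "y \<in> V" "{x, y} \<in> T" "{y, u} \<in> T" "du y = 1" "dv y = 2"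
proof -
  have "\<exists>y. y \<in> V \<and> {x, y} \<in> T \<and> {y, u} \<in> T" using T_path_of_dist_to_2[OF x(1), of u] x by auto
  then show y: "y \<in> V" "{x, y} \<in> T" "{y, u} \<in> T"
    unfolding y_def step_toward_def by (metis (mono_tags, lifting) someI_ex)+
  then show duy: "du y = 1" using dist_to_eq_1_iff by simp
  have "y \<noteq> v" using dist_to_eq_1_iff[OF x(1), of v] y x u_side_dists[OF x(1,2)] by auto
  then have "dv y \<noteq> 0" "dv y \<noteq> 1"
    using dist_to_eq_0_iff[OF y(1), of v] du_neq_dv[OF y(1)] duy by auto
  moreover have "dv y \<le> 2" using dist_u_dist_v_close[OF y(1)] duy by auto
  ultimately show "dv y = 2" by auto
qed

lemma T_edge_between_sides:
  assumes x: "x \<in> V" "du x < dv x" and y: "y \<in> V" "\<not> du y < dv y" and e: "{x, y} \<in> T"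
  shows "x = u \<and> y = v"
proof -
  have sx: "du x \<le> 2" "dv x = du x + 1" using u_side_dists[OF x] by auto
  have sy: "dv y \<le> 2" "du y = dv y + 1" using v_side_dists[OF y] by auto
  have "du y \<le> du x + 1" using dist_to_T_edge_le[OF y(1) x(1), of u] e by (simp add: insert_commute)
  moreover have "dv x \<le> dv y + 1" using dist_to_T_edge_le[OF x(1) y(1) e, of v] by simp
  ultimately have k: "du x = dv y" using sx sy by auto
  from sx consider "du x = 0" | "du x = 1" | "du x = 2" by linarith
  then show ?thesis
  proof cases
    case 1
    then show ?thesis
      using k dist_to_eq_0_iff[OF x(1), of u] dist_to_eq_0_iff[OF y(1), of v] by auto
  next
    case 2
    have "{x, u} \<in> T" "{y, v} \<in> T"
      using dist_to_eq_1_iff[OF x(1), of u] dist_to_eq_1_iff[OF y(1), of v] 2 k by auto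
    moreover have "distinct [x, u, v, y]" using 2 k sx sy dist_centers
      by (auto dest: arg_cong[where f=du] arg_cong[where f=dv])
    ultimately show ?thesis
      using no_T_cycle[of "[x, u, v, y]"] e x y u_in_V v_in_V uv_in_T by (auto simp: insert_commute)
  next
    case 3
    define p where "p = step_toward V T u x"
    have p: "p \<in> V" "{x, p} \<in> T" "{p, u} \<in> T" "du p = 1" "dv p = 2"
      using step_toward_u[OF x 3] unfolding p_def by auto
    obtain z where z: "z \<in> V" "{y, z} \<in> T" "{z, v} \<in> T"
      using T_path_of_dist_to_2[OF y(1), of v] 3 k by auto
    have dvz: "dv z = 1" using dist_to_eq_1_iff[OF z(1), of v] z by simp
    have "z \<noteq> u" using dist_to_eq_1_iff[OF y(1), of u] z 3 k sy by auto
    then have "du z \<noteq> 0" "du z \<noteq> 1" using dist_to_eq_0_iff[OF z(1), of u] du_neq_dv[OF z(1)] dvz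
      by auto
    moreover have "du z \<le> 2" using dist_u_dist_v_close[OF z(1)] dvz by auto
    ultimately have duz: "du z = 2" by auto
    have "distinct [x, p, u, v, z, y]" using 3 k sx sy dist_centers p dvz duz
      by (auto dest: arg_cong[where f=du] arg_cong[where f=dv])
    then show ?thesis
      using no_T_cycle[of "[x, p, u, v, z, y]"] p z e x y u_in_V v_in_V uv_in_T
      by (auto simp: insert_commute)
  qed
qed

text \<open>Any other tree neighbour would lead back to \<open>u\<close> and close a cycle.\<close>
lemma T_neighbour_eq_step_toward:
  assumes x: "x \<in> V" "du x < dv x" "du x = 2" and y: "y \<in> V" "{x, y} \<in> T"
  shows "y = step_toward V T u x"
proof -
  define p where "p = step_toward V T u x"
  have p: "p \<in> V" "{x, p} \<in> T" "{p, u} \<in> T" "du p = 1"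
    using step_toward_u[OF x] unfolding p_def by auto
  have yU: "du y < dv y"
  proof (rule ccontr)
    assume "\<not> du y < dv y"
    then have "x = u" using T_edge_between_sides[OF x(1,2) y(1) _ y(2)] by blast
    then show False using x(3) dist_centers by simp
  qed
  have "y \<noteq> u" "x \<noteq> y" using dist_to_eq_1_iff[OF x(1), of u] y x T_edge_neq by auto
  then have "du y \<noteq> 0" using dist_to_eq_0_iff[OF y(1), of u] by auto
  with u_side_dists[OF y(1) yU] consider "du y = 1" | "du y = 2" by linarith
  then show ?thesis
  proof cases
    case 1
    have "{y, u} \<in> T" using dist_to_eq_1_iff[OF y(1), of u] 1 by auto
    moreover have "y \<noteq> p \<Longrightarrow> distinct [x, y, u, p]"
      using \<open>x \<noteq> y\<close> 1 p x dist_centers by (auto dest: arg_cong[where f=du])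
    ultimately show ?thesis
      using no_T_cycle[of "[x, y, u, p]"] p y x u_in_V unfolding p_def
      by (auto simp: insert_commute)
  next
    case 2
    define q where "q = step_toward V T u y"
    have q: "q \<in> V" "{y, q} \<in> T" "{q, u} \<in> T" "du q = 1"
      using step_toward_u[OF y(1) yU 2] unfolding q_def by auto
    show ?thesis
    proof (cases "p = q")
      case True
      have "distinct [x, y, p]" using \<open>x \<noteq> y\<close> p 2 x by (auto dest: arg_cong[where f=du])
      then show ?thesis using no_T_cycle[of "[x, y, p]"] p q y x True by (auto simp: insert_commute)
    next
      case False
      have "distinct [x, y, q, u, p]" using \<open>x \<noteq> y\<close> False p q 2 x dist_centers
        by (auto dest: arg_cong[where f=du])
      then show ?thesis using no_T_cycle[of "[x, y, q, u, p]"] p q y x u_in_V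
        by (auto simp: insert_commute)
    qed
  qed
qed

text \<open>A tree path of length at most 3 from \<open>a\<close> to \<open>b\<close> starts and ends with their tree
  neighbours towards \<open>u\<close>; if these differ, they close a cycle with \<open>u\<close>.\<close>
lemma step_toward_eq_of_E_edge:
  assumes a: "a \<in> V" "du a < dv a" "du a = 2" and b: "b \<in> V" "du b < dv b" "du b = 2"
    and e: "{a, b} \<in> E"
  shows "step_toward V T u a = step_toward V T u b"
proof -
  define p q where "p = step_toward V T u a" and "q = step_toward V T u b"
  have p: "p \<in> V" "{p, u} \<in> T" "du p = 1" and q: "q \<in> V" "{q, u} \<in> T" "du q = 1"
    using step_toward_u[OF a] step_toward_u[OF b] unfolding p_def q_def by auto
  have "gdist V T a b \<le> enat (Suc (Suc 1))"
    using gdist_T_le_3_of_E_edge[OF a(1) b(1) e] by (simp add: numeral_eq_enat numeral_3_eq_3)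
  then obtain c where c: "c \<in> V" "{a, c} \<in> T" "gdist V T c b \<le> enat (Suc 1)"
    using gdist_le_Suc_cases[of V T a b "Suc 1"] E_edge_neq[OF e] by blast
  have "c = p" using T_neighbour_eq_step_toward[OF a c(1,2)] unfolding p_def .
  then have "c \<noteq> b" using p b by auto
  then obtain d where d: "d \<in> V" "{c, d} \<in> T" "gdist V T d b \<le> enat (Suc 0)"
    using gdist_le_Suc_cases[OF c(3)] by (auto simp: One_nat_def)
  show ?thesis
  proof (cases "d = b")
    case True
    then show ?thesis
      using T_neighbour_eq_step_toward[OF b c(1)] d(2) \<open>c = p\<close> unfolding p_def q_def
      by (simp add: insert_commute)
  next
    case False
    then obtain w where "{d, w} \<in> T" "gdist V T w b \<le> enat 0"
      using gdist_le_Suc_cases[OF d(3)] by blast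
    then have "{d, b} \<in> T" using gdist_le_0_imp_eq[of V T w b] by simp
    then have "d = q" using T_neighbour_eq_step_toward[OF b d(1)] unfolding q_def
      by (simp add: insert_commute)
    show ?thesis
    proof (rule ccontr)
      assume "step_toward V T u a \<noteq> step_toward V T u b"
      then have "distinct [c, d, u]" using \<open>c = p\<close> \<open>d = q\<close> p q dist_centers
        unfolding p_def q_def by (auto dest: arg_cong[where f=du])
      then show False
        using no_T_cycle[of "[c, d, u]"] d c p q \<open>c = p\<close> \<open>d = q\<close> u_in_V
        by (auto simp: insert_commute)
    qed
  qed
qed

lemma swap_centers: "five_centered_spanner V E T v u"
  using simple spanner five_center
  by unfold_locales (auto simp: five_center_def insert_commute)

lemma u_side_dist_2:
  assumes "x \<in> V" "du x < dv x" "x \<noteq> u" "{x, u} \<notin> E"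
  shows "du x = 2"
proof -
  have "du x \<noteq> 0" "du x \<noteq> 1"
    using assms dist_to_eq_0_iff[of x u] dist_to_eq_1_iff[of x u] T_subset_E by auto
  then show ?thesis using u_side_dists[OF assms(1,2)] by linarith
qed

text \<open>The new tree is rooted at \<open>v\<close>, and \<open>conc_rank\<close> is the depth in it.\<close>
definition conc_parent :: "'a \<Rightarrow> 'a" where
  "conc_parent x =
    (if du x < dv x then (if x = u then v else if {x, u} \<in> E then u else step_toward V T u x)
     else (if {x, v} \<in> E then v else step_toward V T v x))"

definition conc_rank :: "'a \<Rightarrow> nat" where
  "conc_rank x =
    (if du x < dv x then (if x = u then 1 else if {x, u} \<in> E then 2 else 3)
     else (if x = v then 0 else if {x, v} \<in> E then 1 else 2))"

definition conc_tree :: "'a set set" where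
  "conc_tree = {{x, conc_parent x} | x. x \<in> V \<and> x \<noteq> v}"

lemma u_on_u_side: "du u < dv u" and v_on_v_side: "\<not> du v < dv v"
  using dist_centers by auto

lemma conc_rank_u: "conc_rank u = 1" and conc_rank_v: "conc_rank v = 0"
  using u_on_u_side v_on_v_side u_neq_v by (auto simp: conc_rank_def)

lemma conc_parent_far_u:
  assumes "x \<in> V" "du x < dv x" "x \<noteq> u" "{x, u} \<notin> E"
  shows "conc_parent x = step_toward V T u x \<and> du x = 2 \<and> conc_rank x = 3"
  using assms u_side_dist_2[OF assms] by (simp add: conc_parent_def conc_rank_def)

lemma conc_parent_far_v:
  assumes "x \<in> V" "\<not> du x < dv x" "x \<noteq> v" "{x, v} \<notin> E"
  shows "conc_parent x = step_toward V T v x \<and> dv x = 2 \<and> conc_rank x = 2"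
proof -
  have "dv x < du x" using v_side_dists[OF assms(1,2)] by simp
  then have "dv x = 2"
    using five_centered_spanner.u_side_dist_2[OF swap_centers, of x] assms
    by (simp add: insert_commute)
  then show ?thesis using assms by (simp add: conc_parent_def conc_rank_def)
qed

lemma conc_parent_step:
  assumes x: "x \<in> V" "x \<noteq> v"
  shows "conc_parent x \<in> V \<and> {x, conc_parent x} \<in> E \<and> conc_rank (conc_parent x) + 1 = conc_rank x \<and>
    ((x = u \<and> conc_parent x = v) \<or> (du (conc_parent x) < dv (conc_parent x) \<longleftrightarrow> du x < dv x))"
proof (cases "du x < dv x")
  case xU: True
  show ?thesis
  proof (cases "x = u")
    case True
    then show ?thesis using v_in_V uv_in_T T_subset_E conc_rank_u conc_rank_v
      by (auto simp: conc_parent_def u_on_u_side)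
  next
    case xu: False
    show ?thesis
    proof (cases "{x, u} \<in> E")
      case True
      then show ?thesis using xU xu u_in_V conc_rank_u u_on_u_side
        by (simp add: conc_parent_def conc_rank_def)
    next
      case False
      have p: "conc_parent x = step_toward V T u x" "du x = 2" "conc_rank x = 3"
        using conc_parent_far_u[OF x(1) xU xu False] by auto
      define y where "y = step_toward V T u x"
      have y: "y \<in> V" "{x, y} \<in> T" "{y, u} \<in> T" "du y = 1" "dv y = 2"
        using step_toward_u[OF x(1) xU p(2)] unfolding y_def by auto
      moreover have "y \<noteq> u" using y(4) dist_centers by auto
      moreover have "{y, u} \<in> E" using y T_subset_E by auto
      ultimately have "conc_rank y = 2" by (simp add: conc_rank_def)
      then show ?thesis using p y_def y T_subset_E xU by auto
    qed
  qed
next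
  case xV: False
  show ?thesis
  proof (cases "{x, v} \<in> E")
    case True
    then show ?thesis using xV x v_in_V conc_rank_v v_on_v_side
      by (simp add: conc_parent_def conc_rank_def)
  next
    case False
    have p: "conc_parent x = step_toward V T v x" "dv x = 2" "conc_rank x = 2"
      using conc_parent_far_v[OF x(1) xV x(2) False] by auto
    have dvx: "dv x < du x" using v_side_dists[OF x(1) xV] by simp
    define y where "y = step_toward V T v x"
    have y: "y \<in> V" "{x, y} \<in> T" "{y, v} \<in> T" "dv y = 1" "du y = 2"
      using five_centered_spanner.step_toward_u[OF swap_centers x(1) dvx p(2)] unfolding y_def
      by auto
    moreover have "y \<noteq> v" using y(4) dist_centers by auto
    moreover have "{y, v} \<in> E" using y T_subset_E by auto
    ultimately have "conc_rank y = 1" by (simp add: conc_rank_def)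
    then show ?thesis using p y_def y T_subset_E xV by auto
  qed
qed

lemma conc_tree_edge: "x \<in> V \<Longrightarrow> x \<noteq> v \<Longrightarrow> {x, conc_parent x} \<in> conc_tree"
  unfolding conc_tree_def by blast

lemma conc_tree_is_tree: "is_tree V conc_tree"
proof (rule is_tree_of_parent_map[OF _ v_in_V _ conc_tree_def])
  show "finite V" using simple by (simp add: simple_graph_def)
  show "conc_parent x \<in> V \<and> conc_rank (conc_parent x) < conc_rank x" if "x \<in> V" "x \<noteq> v" for x
    using conc_parent_step[OF that] by linarith
qed

lemma conc_tree_subset_E: "conc_tree \<subseteq> E"
  using conc_parent_step unfolding conc_tree_def by blast

lemma uv_in_conc_tree: "{u, v} \<in> conc_tree"
  using conc_tree_edge[OF u_in_V u_neq_v] u_on_u_side by (simp add: conc_parent_def)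

lemma conc_rank_u_side:
  assumes "x \<in> V" "du x < dv x"
  shows "1 \<le> conc_rank x" "conc_rank x \<le> 3" "conc_rank x - 1 \<le> du x"
proof -
  have "x \<noteq> u \<Longrightarrow> du x \<ge> 1" using dist_to_eq_0_iff[OF assms(1), of u] by auto
  then show "1 \<le> conc_rank x" "conc_rank x \<le> 3" "conc_rank x - 1 \<le> du x"
    using assms conc_parent_far_u[OF assms] conc_rank_u by (auto simp: conc_rank_def)
qed

lemma conc_rank_v_side:
  assumes "x \<in> V" "\<not> du x < dv x"
  shows "conc_rank x \<le> 2" "conc_rank x \<le> dv x"
proof -
  have "x \<noteq> v \<Longrightarrow> dv x \<ge> 1" using dist_to_eq_0_iff[OF assms(1), of v] by auto
  then show "conc_rank x \<le> 2" "conc_rank x \<le> dv x"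
    using assms conc_parent_far_v[OF assms] conc_rank_v by (auto simp: conc_rank_def)
qed

lemma gdist_conc_u_side:
  "x \<in> V \<Longrightarrow> du x < dv x \<Longrightarrow> gdist V conc_tree x u \<le> enat (conc_rank x - 1)"
proof (induction "conc_rank x" arbitrary: x rule: less_induct)
  case less
  show ?case
  proof (cases "x = u")
    case True
    then show ?thesis using gdist_self[OF u_in_V] by (simp add: zero_enat_def)
  next
    case False
    let ?p = "conc_parent x"
    have xv: "x \<noteq> v" using less v_on_v_side by auto
    have p: "?p \<in> V" "conc_rank ?p + 1 = conc_rank x" "du ?p < dv ?p"
      using conc_parent_step[OF less(2) xv] less False by auto
    have "gdist V conc_tree x u \<le> gdist V conc_tree x ?p + gdist V conc_tree ?p u"
      by (rule gdist_triangle)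
    also have "\<dots> \<le> 1 + enat (conc_rank ?p - 1)"
      using gdist_edge[OF less(2) p(1) conc_tree_edge[OF less(2) xv]] less(1)[of ?p] p
      by (intro add_mono) auto
    also have "\<dots> = enat (conc_rank x - 1)"
      using p conc_rank_u_side(1)[OF p(1,3)] by (simp add: one_enat_def)
    finally show ?thesis .
  qed
qed

lemma gdist_conc_v_side:
  "x \<in> V \<Longrightarrow> \<not> du x < dv x \<Longrightarrow> gdist V conc_tree x v \<le> enat (conc_rank x)"
proof (induction "conc_rank x" arbitrary: x rule: less_induct)
  case less
  show ?case
  proof (cases "x = v")
    case True
    then show ?thesis using gdist_self[OF v_in_V] by (simp add: zero_enat_def)
  next
    case False
    let ?p = "conc_parent x"
    have xu: "x \<noteq> u" using less u_on_u_side by auto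
    have p: "?p \<in> V" "conc_rank ?p + 1 = conc_rank x" "\<not> du ?p < dv ?p"
      using conc_parent_step[OF less(2) False] less xu by auto
    have "gdist V conc_tree x v \<le> gdist V conc_tree x ?p + gdist V conc_tree ?p v"
      by (rule gdist_triangle)
    also have "\<dots> \<le> 1 + enat (conc_rank ?p)"
      using gdist_edge[OF less(2) p(1) conc_tree_edge[OF less(2) False]] less(1)[of ?p] p
      by (intro add_mono) auto
    also have "\<dots> = enat (conc_rank x)" using p by (simp add: one_enat_def)
    finally show ?thesis .
  qed
qed

text \<open>Source of the lower bounds on distances in the new tree that give concentration.\<close>
definition signed_rank :: "'a \<Rightarrow> int" where
  "signed_rank x = (if du x < dv x then - int (conc_rank x) else int (conc_rank x))"

lemma signed_rank_conc_tree_edge: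
  assumes "a \<in> V" "b \<in> V" "{a, b} \<in> conc_tree"
  shows "\<bar>signed_rank a - signed_rank b\<bar> \<le> 1"
proof -
  obtain x where x: "{a, b} = {x, conc_parent x}" "x \<in> V" "x \<noteq> v"
    using assms(3) unfolding conc_tree_def by blast
  have "\<bar>signed_rank x - signed_rank (conc_parent x)\<bar> \<le> 1"
  proof (cases "x = u \<and> conc_parent x = v")
    case True
    then have "x = u" "conc_parent x = v" by auto
    then show ?thesis
      using conc_rank_u conc_rank_v u_on_u_side v_on_v_side by (simp add: signed_rank_def)
  next
    case False
    then show ?thesis using conc_parent_step[OF x(2,3)] by (auto simp: signed_rank_def)
  qed
  then show ?thesis using x(1) by (auto simp: doubleton_eq_iff)
qed

lemma conc_gdist_v_side_to_u:
  assumes "w \<in> V" "\<not> du w < dv w" "gdist V conc_tree w u \<le> enat n"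
  shows "conc_rank w + 1 \<le> n"
  using potential_diff_le_gdist[of V conc_tree signed_rank, OF signed_rank_conc_tree_edge assms(3)]
    assms(2)
    conc_rank_u u_on_u_side by (simp add: signed_rank_def)

lemma conc_gdist_u_side_to_v:
  assumes "w \<in> V" "du w < dv w" "gdist V conc_tree w v \<le> enat n"
  shows "conc_rank w \<le> n"
  using potential_diff_le_gdist[of V conc_tree signed_rank, OF signed_rank_conc_tree_edge assms(3)]
    assms(2)
    conc_rank_v v_on_v_side by (simp add: signed_rank_def)

lemma five_center_conc_tree: "five_center V conc_tree u v"
  unfolding five_center_def
proof (intro conjI ballI u_in_V v_in_V uv_in_conc_tree)
  fix w assume w: "w \<in> V"
  show "gdist V conc_tree w u \<le> 2 \<or> gdist V conc_tree w v \<le> 2"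
  proof (cases "du w < dv w")
    case True
    then have "gdist V conc_tree w u \<le> enat (conc_rank w - 1)" "conc_rank w - 1 \<le> 2"
      using gdist_conc_u_side[OF w True] conc_rank_u_side(2)[OF w True] by auto
    then show ?thesis by (metis enat_ord_simps(1) numeral_eq_enat order_trans)
  next
    case False
    then have "gdist V conc_tree w v \<le> enat (conc_rank w)" "conc_rank w \<le> 2"
      using gdist_conc_v_side[OF w False] conc_rank_v_side(1)[OF w False] by auto
    then show ?thesis by (metis enat_ord_simps(1) numeral_eq_enat order_trans)
  qed
qed

lemma concentrated_conc_tree: "concentrated V E conc_tree u v"
  unfolding concentrated_def
proof (intro conjI ballI impI five_center_conc_tree; elim conjE)
  fix w assume w: "w \<in> V" "{w, u} \<in> E" "gdist V conc_tree w u < gdist V conc_tree w v"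
  show "{w, u} \<in> conc_tree"
  proof (cases "du w < dv w")
    case True
    have "w \<noteq> u" using E_edge_neq w(2) by blast
    moreover have "w \<noteq> v" using True v_on_v_side by auto
    ultimately show ?thesis using conc_tree_edge[OF w(1)] True w(2) by (simp add: conc_parent_def)
  next
    case False
    then have "gdist V conc_tree w u < enat (conc_rank w)"
      using gdist_conc_v_side[OF w(1)] w(3) by (meson order_less_le_trans)
    then obtain n where "gdist V conc_tree w u = enat n" "n < conc_rank w"
      by (cases "gdist V conc_tree w u") auto
    with conc_gdist_v_side_to_u[OF w(1) False, of n] show ?thesis by simp
  qed
next
  fix w assume w: "w \<in> V" "{w, v} \<in> E" "gdist V conc_tree w v < gdist V conc_tree w u"
  show "{w, v} \<in> conc_tree"
  proof (cases "du w < dv w")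
    case False
    have "w \<noteq> v" using E_edge_neq w(2) by blast
    then show ?thesis using conc_tree_edge[OF w(1)] False w(2) by (simp add: conc_parent_def)
  next
    case True
    then have "gdist V conc_tree w v < enat (conc_rank w - 1)"
      using gdist_conc_u_side[OF w(1)] w(3) by (meson order_less_le_trans)
    then obtain n where "gdist V conc_tree w v = enat n" "n < conc_rank w - 1"
      by (cases "gdist V conc_tree w v") auto
    with conc_gdist_u_side_to_v[OF w(1) True, of n] show ?thesis by simp
  qed
qed

lemma conc_gdist_same_parent:
  assumes "a \<in> V" "b \<in> V" "a \<noteq> v" "b \<noteq> v" "conc_parent a = conc_parent b"
  shows "gdist V conc_tree a b \<le> 2"
proof -
  let ?p = "conc_parent a"
  have p: "?p \<in> V" using conc_parent_step[OF assms(1,3)] by blast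
  have "{b, ?p} \<in> conc_tree" using conc_tree_edge[OF assms(2,4)] assms(5) by simp
  then have "gdist V conc_tree ?p b \<le> 1"
    using gdist_edge[OF assms(2) p, of conc_tree] gdist_commute[of V conc_tree b ?p] by simp
  moreover have "gdist V conc_tree a ?p \<le> 1"
    using gdist_edge[OF assms(1) p conc_tree_edge[OF assms(1,3)]] .
  ultimately have "gdist V conc_tree a b \<le> 1 + 1"
    using gdist_triangle[of V conc_tree a b ?p] by (meson add_mono order_trans)
  then show ?thesis by (simp add: one_add_one)
qed

lemma conc_gdist_E_edge_u_side:
  assumes ab: "a \<in> V" "b \<in> V" "{a, b} \<in> E" and sides: "du a < dv a" "du b < dv b"
  shows "gdist V conc_tree a b \<le> 3"
proof (cases "conc_rank a + conc_rank b \<le> 5")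
  case True
  have "gdist V conc_tree a b \<le> gdist V conc_tree a u + gdist V conc_tree u b"
    by (rule gdist_triangle)
  also have "\<dots> \<le> enat (conc_rank a - 1) + enat (conc_rank b - 1)"
    using gdist_conc_u_side[OF ab(1) sides(1)] gdist_conc_u_side[OF ab(2) sides(2)]
      gdist_commute[of V conc_tree u b] by (intro add_mono) auto
  also have "\<dots> \<le> 3"
    using True conc_rank_u_side(1)[OF ab(1) sides(1)] conc_rank_u_side(1)[OF ab(2) sides(2)]
    by (simp add: numeral_eq_enat)
  finally show ?thesis .
next
  case False
  then have "conc_rank a = 3" "conc_rank b = 3"
    using conc_rank_u_side(2)[OF ab(1) sides(1)] conc_rank_u_side(2)[OF ab(2) sides(2)] by auto
  then have far: "a \<noteq> u" "{a, u} \<notin> E" "b \<noteq> u" "{b, u} \<notin> E"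
    using sides conc_rank_u by (auto simp: conc_rank_def split: if_splits)
  have "conc_parent a = conc_parent b"
    using conc_parent_far_u[OF ab(1) sides(1) far(1,2)]
      conc_parent_far_u[OF ab(2) sides(2) far(3,4)]
      step_toward_eq_of_E_edge[OF ab(1) sides(1) _ ab(2) sides(2) _ ab(3)] by simp
  moreover have "a \<noteq> v" "b \<noteq> v" using sides v_on_v_side by auto
  ultimately show ?thesis
    using conc_gdist_same_parent ab order_trans[of _ "2::enat" 3] by simp
qed

lemma conc_gdist_E_edge_v_side:
  assumes ab: "a \<in> V" "b \<in> V" "{a, b} \<in> E" and sides: "\<not> du a < dv a" "\<not> du b < dv b"
  shows "gdist V conc_tree a b \<le> 3"
proof (cases "conc_rank a + conc_rank b \<le> 3")
  case True
  have "gdist V conc_tree a b \<le> gdist V conc_tree a v + gdist V conc_tree v b"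
    by (rule gdist_triangle)
  also have "\<dots> \<le> enat (conc_rank a) + enat (conc_rank b)"
    using gdist_conc_v_side[OF ab(1) sides(1)] gdist_conc_v_side[OF ab(2) sides(2)]
      gdist_commute[of V conc_tree v b] by (intro add_mono) auto
  also have "\<dots> \<le> 3" using True by (simp add: numeral_eq_enat)
  finally show ?thesis .
next
  case False
  then have "conc_rank a = 2" "conc_rank b = 2"
    using conc_rank_v_side(1)[OF ab(1) sides(1)] conc_rank_v_side(1)[OF ab(2) sides(2)] by auto
  then have far: "a \<noteq> v" "{a, v} \<notin> E" "b \<noteq> v" "{b, v} \<notin> E"
    using sides conc_rank_v by (auto simp: conc_rank_def split: if_splits)
  have "dv a < du a" "dv b < du b"
    using v_side_dists[OF ab(1) sides(1)] v_side_dists[OF ab(2) sides(2)] by auto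
  then have "conc_parent a = conc_parent b"
    using conc_parent_far_v[OF ab(1) sides(1) far(1,2)]
      conc_parent_far_v[OF ab(2) sides(2) far(3,4)]
      five_centered_spanner.step_toward_eq_of_E_edge[OF swap_centers ab(1) _ _ ab(2) _ _ ab(3)]
    by simp
  then show ?thesis
    using conc_gdist_same_parent ab far order_trans[of _ "2::enat" 3] by simp
qed

text \<open>Since \<open>uv\<close> is the only tree edge between the two sides, this potential changes by at most
  one along tree edges; so the ends of an edge of \<open>G\<close>, at tree distance at most 3, cannot both be
  far from their centres.\<close>
definition side_potential :: "'a \<Rightarrow> int" where
  "side_potential x = (if du x < dv x then - int (du x) else int (dv x) + 1)"

lemma side_potential_T_edge:
  assumes "a \<in> V" "b \<in> V" "{a, b} \<in> T"
  shows "\<bar>side_potential a - side_potential b\<bar> \<le> 1"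
proof -
  have ba: "{b, a} \<in> T" using assms(3) by (simp add: insert_commute)
  consider "du a < dv a" "du b < dv b" | "\<not> du a < dv a" "\<not> du b < dv b"
    | "du a < dv a" "\<not> du b < dv b" | "\<not> du a < dv a" "du b < dv b" by blast
  then show ?thesis
  proof cases
    case 1
    then show ?thesis
      using dist_to_T_edge_le[OF assms, of u] dist_to_T_edge_le[OF assms(2,1) ba, of u]
      by (auto simp: side_potential_def)
  next
    case 2
    then show ?thesis
      using dist_to_T_edge_le[OF assms, of v] dist_to_T_edge_le[OF assms(2,1) ba, of v]
      by (auto simp: side_potential_def)
  next
    case 3
    then have "a = u" "b = v" using T_edge_between_sides[OF assms(1) _ assms(2) _ assms(3)] by auto
    then show ?thesis using dist_centers by (simp add: side_potential_def)
  next
    case 4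
    then have "b = u" "a = v" using T_edge_between_sides[OF assms(2) _ assms(1) _ ba] by auto
    then show ?thesis using dist_centers by (simp add: side_potential_def)
  qed
qed

lemma E_edge_across_dists:
  assumes "a \<in> V" "b \<in> V" "{a, b} \<in> E" "du a < dv a" "\<not> du b < dv b"
  shows "du a + dv b \<le> 2"
proof -
  have "\<bar>side_potential a - side_potential b\<bar> \<le> 3"
    using potential_diff_le_gdist[of V T side_potential, OF side_potential_T_edge, of a b 3]
      gdist_T_le_3_of_E_edge[OF assms(1-3)] by (simp add: numeral_eq_enat)
  then show ?thesis using assms(4,5) by (simp add: side_potential_def)
qed

lemma conc_gdist_E_edge_across:
  assumes ab: "a \<in> V" "b \<in> V" "{a, b} \<in> E" "du a < dv a" "\<not> du b < dv b"
  shows "gdist V conc_tree a b \<le> 3"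
proof -
  have "gdist V conc_tree a b \<le> gdist V conc_tree a u + gdist V conc_tree u b"
    by (rule gdist_triangle)
  also have "\<dots> \<le> gdist V conc_tree a u + (gdist V conc_tree u v + gdist V conc_tree v b)"
    by (intro add_left_mono gdist_triangle)
  also have "\<dots> \<le> enat (conc_rank a - 1) + (1 + enat (conc_rank b))"
    using gdist_conc_u_side[OF ab(1,4)] gdist_conc_v_side[OF ab(2,5)]
      gdist_edge[OF u_in_V v_in_V uv_in_conc_tree] gdist_commute[of V conc_tree v b]
    by (intro add_mono) auto
  also have "\<dots> \<le> 3"
    using conc_rank_u_side(3)[OF ab(1,4)] conc_rank_v_side(2)[OF ab(2,5)] E_edge_across_dists[OF ab]
    by (simp add: one_enat_def numeral_eq_enat)
  finally show ?thesis .
qed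

lemma conc_gdist_E_edge:
  assumes "a \<in> V" "b \<in> V" "{a, b} \<in> E"
  shows "gdist V conc_tree a b \<le> 3"
proof -
  have ba: "{b, a} \<in> E" using assms(3) by (simp add: insert_commute)
  consider "du a < dv a" "du b < dv b" | "\<not> du a < dv a" "\<not> du b < dv b"
    | "du a < dv a" "\<not> du b < dv b" | "\<not> du a < dv a" "du b < dv b" by blast
  then show ?thesis
  proof cases
    case 4
    then show ?thesis using conc_gdist_E_edge_across[OF assms(2,1) ba]
      gdist_commute[of V conc_tree a b] by simp
  qed (use assms conc_gdist_E_edge_u_side conc_gdist_E_edge_v_side conc_gdist_E_edge_across
      in blast)+
qed

lemma conc_tree_3_spanner: "tree_3_spanner V E conc_tree"
  unfolding tree_3_spanner_def
  using conc_tree_subset_E conc_tree_is_tree gdist_le_3_times_of_edges[OF conc_gdist_E_edge]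
  by blast

end

theorem lemma2:
  fixes V :: "'a set" and E :: "'a set set" and u v :: 'a
  assumes "simple_graph V E"
    and "{u, v} \<in> E"
    and "\<exists>T. tree_3_spanner V E T \<and> five_center V T u v"
  shows "\<exists>T. tree_3_spanner V E T \<and> concentrated V E T u v"
proof -
  obtain T where "tree_3_spanner V E T" "five_center V T u v"
    using assms(3) by blast
  then interpret five_centered_spanner V E T u v
    using assms(1) by unfold_locales
  show ?thesis
    using conc_tree_3_spanner concentrated_conc_tree by blast
qed

end
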